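(* Let $\ell\ne-2$, $z\in\mathbb Q$ with $0<z<1$, and consider $V(\ell,\mathbb C)$ as a $\mathbb Q$-graded vertex operator algebra with conformal vector $\omega_z$. Let $M$ be any weak $V(\ell,\mathbb C)$-module. Then $O(M)$ is the linear span of the elements $$(f(-m)+f(1-m))u,\qquad e(-m)u,\qquad (h(-m-1)+h(-m))u$$ for all positive integers $m$ and all $u\in M$.
   Context: $\mathfrak g=sl_2$ (basis $e,f,h$), $\tilde{\mathfrak g}=\mathbb C[x,x^{-1}]\otimes\mathfrak g\oplus\mathbb Cc$ the affine Lie algebra with $[a(m),b(n)]=[a,b](m+n)+m\langle a,b\rangle\delta_{m+n,0}c$, $a(n)=x^n\otimes a$, $\langle h,h\rangle=2$, $\langle e,f\rangle=1$. $V(\ell,\mathbb C)=U(\tilde{\mathfrak g})\otimes_{U(\mathbb C[x]\otimes\mathfrak g\oplus\mathbb Cc)}\mathbb C$ (trivial $\mathfrak g\otimes\mathbb C[x]$-action, $c$ acting as $\ell$), a vertex operator algebra with vacuum $\mathbf 1$, $Y(a(-1)\mathbf 1,z)=\sum a(n)z^{-n-1}$, Segal–Sugawara vector $\omega$; $\omega_z=\omega+\frac12zh(-2)\mathbf 1$ makes it a $\mathbb Q$-graded vertex operator algebra with $L_z(0)=L(0)-\frac12zh(0)$, so that ${\rm wt}\,h(-1)\mathbf 1=1$, ${\rm wt}\,e(-1)\mathbf 1=1-z$, ${\rm wt}\,f(-1)\mathbf 1=1+z$. Weak $V(\ell,\mathbb C)$-modules are the restricted level-$\ell$ $\tilde{\mathfrak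 g}$-modules with $Y(a(-1)\mathbf 1,z)=\sum a(n)z^{-n-1}$. For homogeneous $a$ (w.r.t. $L_z(0)$), $\varepsilon(a)=1$ if ${\rm wt}a\in\mathbb Z$, else $0$; $[\cdot]$ is the greatest-integer function; $O(M)$ is the span of ${\rm Res}_x\frac{(1+x)^{[{\rm wt}a]}}{x^{1+\varepsilon(a)}}Y(a,x)u$ for homogeneous $a\in V(\ell,\mathbb C)$ and $u\in M$. *)

theory Defs
  imports Complex_Main "HOL-Library.Groups_Big_Fun"
begin

datatype sl2 = E | F | H

fun sl2_form :: "sl2 \<Rightarrow> sl2 \<Rightarrow> complex" where
  "sl2_form H H = 2"
| "sl2_form E F = 1"
| "sl2_form F E = 1"
| "sl2_form _ _ = 0"

text \<open>Action of [a,b](k) on u, where act b k is the operator b(k) = x^k (x) b.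
  [h,e]=2e, [h,f]=-2f, [e,f]=h.\<close>
fun bracket_act :: "(complex \<Rightarrow> 'm \<Rightarrow> 'm) \<Rightarrow> (sl2 \<Rightarrow> int \<Rightarrow> 'm \<Rightarrow> 'm)
     \<Rightarrow> sl2 \<Rightarrow> sl2 \<Rightarrow> int \<Rightarrow> 'm \<Rightarrow> 'm" where
  "bracket_act scale act H E k u = scale 2 (act E k u)"
| "bracket_act scale act E H k u = scale (-2) (act E k u)"
| "bracket_act scale act H F k u = scale (-2) (act F k u)"
| "bracket_act scale act F H k u = scale 2 (act F k u)"
| "bracket_act scale act E F k u = act H k u"
| "bracket_act scale act F E k u = scale (-1) (act H k u)"
| "bracket_act scale act a b k u = scale 0 u"

text \<open>A weak V(l,C)-module = restricted level-l module for the affine algebra of sl_2: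
  a complex vector space M (scalar multiplication scale) with linear operators
  act a n = a(n), satisfying
  [a(m),b(n)] = [a,b](m+n) + m<a,b> delta_{m+n,0} l, and a(n)u = 0 for n >> 0.\<close>
definition weak_affine_module ::
  "(complex \<Rightarrow> 'm::ab_group_add \<Rightarrow> 'm) \<Rightarrow> complex \<Rightarrow> (sl2 \<Rightarrow> int \<Rightarrow> 'm \<Rightarrow> 'm) \<Rightarrow> bool" where
  "weak_affine_module scale l act \<longleftrightarrow>
     vector_space scale \<and>
     (\<forall>a n. Vector_Spaces.linear scale scale (act a n)) \<and>
     (\<forall>a b m n u. act a m (act b n u) - act b n (act a m u) =
          bracket_act scale act a b (m + n) u
          + scale (of_int m * sl2_form a b * (if m + n = 0 then 1 else 0) * l) u) \<and>
     (\<forall>a u. \<exists>N. \<forall>n\<ge>N. act a n u = 0)"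

text \<open>A word [(b1,n1),...,(bk,nk)] (all ni \<ge> 1) represents the spanning vector
  b1(-n1) ... bk(-nk) 1 of V(l,C).  vmode act w m is the mode v_m of the vertex
  operator Y(v,x) = sum_m v_m x^(-m-1) acting on the module, defined recursively
  by the iterate formula
  (b(-n)v)_m = sum_{i\<ge>0} (-1)^i binom(-n,i) ( b(-n-i) v_{m+i} - (-1)^n v_{m-n-i} b(i) ),
  where (-1)^i binom(-n,i) = binom(n-1+i,i); the sum is finite on each vector.\<close>
primrec vmode :: "(complex \<Rightarrow> 'm::ab_group_add \<Rightarrow> 'm) \<Rightarrow> (sl2 \<Rightarrow> int \<Rightarrow> 'm \<Rightarrow> 'm)
     \<Rightarrow> (sl2 \<times> nat) list \<Rightarrow> int \<Rightarrow> 'm \<Rightarrow> 'm" where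
  "vmode scale act [] m u = (if m = -1 then u else 0)"
| "vmode scale act (p # w) m u =
     Sum_any (\<lambda>i::nat. scale (of_nat ((snd p - 1 + i) choose i))
        (act (fst p) (- int (snd p) - int i) (vmode scale act w (m + int i) u)
         - scale ((-1) ^ snd p) (vmode scale act w (m - int (snd p) - int i) (act (fst p) (int i) u))))"

text \<open>L_z(0)-weights: wt e(-n) = n - z, wt f(-n) = n + z, wt h(-n) = n; words are homogeneous.\<close>
fun gen_shift :: "rat \<Rightarrow> sl2 \<Rightarrow> rat" where
  "gen_shift z E = - z"
| "gen_shift z F = z"
| "gen_shift z H = 0"

definition word_wt :: "rat \<Rightarrow> (sl2 \<times> nat) list \<Rightarrow> rat" where
  "word_wt z w = (\<Sum>p\<leftarrow>w. of_nat (snd p) + gen_shift z (fst p))"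

definition eps_wt :: "rat \<Rightarrow> int" where
  "eps_wt r = (if r \<in> \<int> then 1 else 0)"

text \<open>Res_x (1+x)^[wt a] / x^(1+eps(a)) Y(a,x) u
   = sum_{j=0}^{[wt a]} binom([wt a],j) a_{j-1-eps(a)} u  (weights are \<ge> 0 here).\<close>
definition res_elem :: "(complex \<Rightarrow> 'm::ab_group_add \<Rightarrow> 'm) \<Rightarrow> (sl2 \<Rightarrow> int \<Rightarrow> 'm \<Rightarrow> 'm)
     \<Rightarrow> rat \<Rightarrow> (sl2 \<times> nat) list \<Rightarrow> 'm \<Rightarrow> 'm" where
  "res_elem scale act z w u =
     (let K = nat \<lfloor>word_wt z w\<rfloor>; ep = eps_wt (word_wt z w) in
      \<Sum>j\<le>K. scale (of_nat (K choose j)) (vmode scale act w (int j - 1 - ep) u))"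

text \<open>O(M): span of the residues over homogeneous a (equivalently over the homogeneous
  spanning words, since the expression is linear in a of fixed weight) and u in M.\<close>
definition O_space :: "(complex \<Rightarrow> 'm::ab_group_add \<Rightarrow> 'm) \<Rightarrow> (sl2 \<Rightarrow> int \<Rightarrow> 'm \<Rightarrow> 'm)
     \<Rightarrow> rat \<Rightarrow> 'm set" where
  "O_space scale act z = module.span scale
     {res_elem scale act z w u | w u. \<forall>p\<in>set w. 1 \<le> snd p}"

end

theory Submission
  imports Defs "HOL-Computational_Algebra.Formal_Power_Series"
begin

text \<open>Write W for the span on the right. The residues of the single generators b(-n)1 are
  e(-n)u, f(-n)u - (-1)^n f(0)u and n (h(-n-1) + h(-n))u, so W is contained in O(M).
  Conversely, by induction on the length of a word a = b(-n)c one shows that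
  Res_x (1 + x)^[wt a] x^(-1-eps(a)-N) Y(a, x)u lies in W for all N \<ge> 0. Expanding
  Y(b(-n)c, x) by the iterate formula, the terms in which b(i), i \<ge> 0, acts first are
  residues for c whose exponents, because 0 < z < 1, are covered by the induction hypothesis.
  In the other terms b(-n-i) acts last, and modulo W we have e(-k) = 0, f(-k) = (-1)^k f(0)
  and h(-k-1) = (-1)^k h(-1). W is stable under h(-1), and f(0) passes through Y(c, x) as
  Y(f(0)c, x), where f(0)c is a combination of words of the same length as c; the binomial
  factors recombine through (1 + x)^-n (1 + x)^n = 1 into residues for c, and for b = f the
  resulting f(0)-term cancels the term of the first kind with i = 0.\<close>

lemma neg_binomial_Vandermonde:
  assumes "1 \<le> n"
  shows "(\<Sum>i\<le>t. (-1)^i * of_nat ((n - 1 + i) choose i) * of_nat ((A + n) choose (t - i)))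
         = (of_nat (A choose t) :: 'a::field_char_0)"
proof -
  have neg: "((- of_nat n :: 'a) gchoose k) = (-1)^k * of_nat ((n - 1 + k) choose k)" for k
  proof -
    have "(of_nat n + of_nat k - 1 :: 'a) = of_nat (n - 1 + k)"
      using assms by simp
    then have "((- of_nat n :: 'a) gchoose k) = (-1)^k * (of_nat (n - 1 + k) gchoose k)"
      by (metis gbinomial_minus)
    then show ?thesis by (simp add: binomial_gbinomial)
  qed
  have "(\<Sum>k\<in>{0..t}. ((- of_nat n :: 'a) gchoose k) * (of_nat (A + n) gchoose (t - k)))
        = (- of_nat n + of_nat (A + n)) gchoose t"
    by (rule gbinomial_Vandermonde)
  then show ?thesis
    by (simp add: neg binomial_gbinomial atMost_atLeast0 mult.assoc)
qed

lemma sum_sum_list_swap: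
  "(\<Sum>i\<in>A. \<Sum>x\<leftarrow>L. g i x) = (\<Sum>x\<leftarrow>L. \<Sum>i\<in>A. (g i x :: 'a::comm_monoid_add))"
  by (induction L) (simp_all add: sum.distrib)

lemma eps_wt_nonneg: "0 \<le> eps_wt r"
  by (simp add: eps_wt_def)

lemma eps_wt_of_nat_add: "eps_wt (of_nat n + r) = eps_wt r"
proof -
  have "(of_nat n + r \<in> \<int>) = (r \<in> \<int>)"
    by (metis Ints_add Ints_diff Ints_of_nat add_diff_cancel_left')
  then show ?thesis by (simp add: eps_wt_def)
qed

lemma floor_minus_frac_ge:
  fixes r z :: rat
  assumes "z < 1"
  shows "\<lfloor>r\<rfloor> - 1 \<le> \<lfloor>r - z\<rfloor>"
proof -
  have "\<lfloor>r - 1\<rfloor> \<le> \<lfloor>r - z\<rfloor>" using assms by (intro floor_mono) simp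
  then show ?thesis by simp
qed

lemma floor_minus_frac_add_eps_wt:
  fixes r z :: rat
  assumes "0 < z" "z < 1"
  shows "\<lfloor>r - z\<rfloor> + eps_wt r \<le> \<lfloor>r\<rfloor>"
proof (cases "r \<in> \<int>")
  case True
  then obtain m where m: "r = of_int m" by (auto elim: Ints_cases)
  have "\<lfloor>r - z\<rfloor> = m - 1" unfolding m using assms by (simp add: floor_eq_iff)
  then show ?thesis using True m by (simp add: eps_wt_def)
next
  case False
  have "\<lfloor>r - z\<rfloor> \<le> \<lfloor>r\<rfloor>" using assms by (intro floor_mono) simp
  then show ?thesis using False by (simp add: eps_wt_def)
qed

lemma floor_plus_frac_add_eps_wt:
  fixes r z :: rat
  assumes "0 < z" "z < 1"
  shows "\<lfloor>r + z\<rfloor> + eps_wt r \<le> \<lfloor>r\<rfloor> + 1"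
proof (cases "r \<in> \<int>")
  case True
  then obtain m where m: "r = of_int m" by (auto elim: Ints_cases)
  have "\<lfloor>r + z\<rfloor> = m" unfolding m using assms by (simp add: floor_eq_iff)
  then show ?thesis using True m by (simp add: eps_wt_def)
next
  case False
  have "\<lfloor>r + z\<rfloor> \<le> \<lfloor>r + 1\<rfloor>" using assms by (intro floor_mono) simp
  then show ?thesis using False by (simp add: eps_wt_def)
qed

definition valid_word :: "(sl2 \<times> nat) list \<Rightarrow> bool" where
  "valid_word w \<longleftrightarrow> (\<forall>p\<in>set w. 1 \<le> snd p)"

lemma valid_word_Nil [simp]: "valid_word []"
  by (simp add: valid_word_def)

lemma valid_word_Cons [simp]: "valid_word ((b, n) # c) \<longleftrightarrow> 1 \<le> n \<and> valid_word c"
  by (simp add: valid_word_def)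

lemma word_wt_Nil [simp]: "word_wt z [] = 0"
  by (simp add: word_wt_def)

lemma word_wt_Cons [simp]: "word_wt z ((b, n) # c) = of_nat n + gen_shift z b + word_wt z c"
  by (simp add: word_wt_def)

lemma word_wt_nonneg:
  assumes "\<bar>z\<bar> \<le> 1" "valid_word w"
  shows "0 \<le> word_wt z w"
  using assms(2)
proof (induction w)
  case Nil then show ?case by simp
next
  case (Cons p w)
  obtain b n where p: "p = (b, n)" by (cases p)
  have "0 \<le> of_nat n + gen_shift z b" using Cons.prems assms(1) p by (cases b) auto
  then show ?case using Cons p by simp
qed

text \<open>Since f(0) kills the vacuum and [f, e] = -h, [f, h] = 2f, [f, f] = 0, the vector
  f(0) b1(-n1) ... bk(-nk) 1 is the linear combination of words listed by
  \<open>f0_on_word\<close>.\<close>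
fun f0_on_word :: "(sl2 \<times> nat) list \<Rightarrow> (complex \<times> (sl2 \<times> nat) list) list" where
  "f0_on_word [] = []"
| "f0_on_word ((b, n) # c) =
     (case b of E \<Rightarrow> [(-1, (H, n) # c)] | H \<Rightarrow> [(2, (F, n) # c)] | F \<Rightarrow> [])
      @ map (\<lambda>(\<alpha>, w). (\<alpha>, (b, n) # w)) (f0_on_word c)"

lemma f0_on_word_length: "x \<in> set (f0_on_word c) \<Longrightarrow> length (snd x) = length c"
  by (induction c arbitrary: x rule: f0_on_word.induct) (auto split: sl2.splits)

lemma f0_on_word_wt: "x \<in> set (f0_on_word c) \<Longrightarrow> word_wt z (snd x) = word_wt z c + z"
  by (induction c arbitrary: x rule: f0_on_word.induct) (auto split: sl2.splits)

lemma f0_on_word_valid: "x \<in> set (f0_on_word c) \<Longrightarrow> valid_word c \<Longrightarrow> valid_word (snd x)"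
  by (induction c arbitrary: x rule: f0_on_word.induct) (auto split: sl2.splits)

abbreviation iterate_coeff :: "nat \<Rightarrow> nat \<Rightarrow> complex" where
  "iterate_coeff n i \<equiv> of_nat ((n - 1 + i) choose i)"

locale sl2_affine_module = vector_space scale
  for scale :: "complex \<Rightarrow> 'm::ab_group_add \<Rightarrow> 'm" +
  fixes act :: "sl2 \<Rightarrow> int \<Rightarrow> 'm \<Rightarrow> 'm" and l :: complex
  assumes linear_act: "Vector_Spaces.linear scale scale (act a n)"
    and act_commutator: "act a m (act b n u) - act b n (act a m u) =
          bracket_act scale act a b (m + n) u
          + scale (of_int m * sl2_form a b * (if m + n = 0 then 1 else 0) * l) u"
    and act_eventually_zero: "\<exists>N. \<forall>n\<ge>N. act a n u = 0"

lemma weak_affine_module_imp_sl2_affine_module: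
  "weak_affine_module scale l act \<Longrightarrow> sl2_affine_module scale act l"
  unfolding weak_affine_module_def sl2_affine_module_def sl2_affine_module_axioms_def
  by blast

context sl2_affine_module
begin

interpretation vsp: vector_space_pair scale scale ..

lemma act_add: "act a n (x + y) = act a n x + act a n y"
  using linear_act vsp.linear_add by blast

lemma act_scale: "act a n (scale c x) = scale c (act a n x)"
  using linear_act vsp.linear_scale by blast

lemma act_diff: "act a n (x - y) = act a n x - act a n y"
  using linear_act vsp.linear_diff by blast

lemma act_zero [simp]: "act a n 0 = 0"
  using linear_act vsp.linear_0 by blast

lemma act_sum: "act a n (sum g A) = (\<Sum>x\<in>A. act a n (g x))"
  using linear_act vsp.linear_sum by blast

lemma act_sum_list: "act a n (\<Sum>x\<leftarrow>L. g x) = (\<Sum>x\<leftarrow>L. act a n (g x))"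
  by (induction L) (simp_all add: act_add)

lemma scale_sum_list: "scale c (\<Sum>x\<leftarrow>L. g x) = (\<Sum>x\<leftarrow>L. scale c (g x))"
  by (induction L) (simp_all add: scale_right_distrib)

lemma span_sum_list: "(\<And>x. x \<in> set L \<Longrightarrow> g x \<in> span S) \<Longrightarrow> (\<Sum>x\<leftarrow>L. g x) \<in> span S"
  by (induction L) (simp_all add: span_add span_zero)

lemma act_commute:
  "act a m (act b n u) = act b n (act a m u) + bracket_act scale act a b (m + n) u
     + scale (of_int m * sl2_form a b * (if m + n = 0 then 1 else 0) * l) u"
  using act_commutator[of a m b n u] by (simp add: algebra_simps)

lemma h_f_commute: "act H p (act F k u) = act F k (act H p u) + scale (-2) (act F (p + k) u)"
  using act_commute[of H p F k u] by simp

lemma h_e_commute: "act H p (act E k u) = act E k (act H p u) + scale 2 (act E (p + k) u)"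
  using act_commute[of H p E k u] by simp

lemma h_h_commute:
  "p + k \<noteq> 0 \<Longrightarrow> act H p (act H k u) = act H k (act H p u)"
  using act_commute[of H p H k u] by simp

lemma zero_mode_commute: "act a 0 (act b k u) = act b k (act a 0 u) + bracket_act scale act a b k u"
  using act_commute[of a 0 b k u] by simp

lemma act_eventually_zero_all: "\<exists>N::nat. \<forall>b. \<forall>n\<ge>N. act b (int n) u = 0"
proof -
  obtain N1 where N1: "\<forall>n\<ge>N1. act E n u = 0" using act_eventually_zero by blast
  obtain N2 where N2: "\<forall>n\<ge>N2. act F n u = 0" using act_eventually_zero by blast
  obtain N3 where N3: "\<forall>n\<ge>N3. act H n u = 0" using act_eventually_zero by blast
  show ?thesis
  proof (intro exI allI impI)
    fix b n assume "nat (max N1 (max N2 N3)) \<le> n"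
    then show "act b (int n) u = 0" using N1 N2 N3 by (cases b) auto
  qed
qed

abbreviation Y :: "(sl2 \<times> nat) list \<Rightarrow> int \<Rightarrow> 'm \<Rightarrow> 'm" where
  "Y \<equiv> vmode scale act"

definition iterate_term :: "sl2 \<Rightarrow> nat \<Rightarrow> (sl2 \<times> nat) list \<Rightarrow> int \<Rightarrow> 'm \<Rightarrow> nat \<Rightarrow> 'm" where
  "iterate_term b n w k u i = scale (iterate_coeff n i)
        (act b (- int n - int i) (Y w (k + int i) u)
         - scale ((-1) ^ n) (Y w (k - int n - int i) (act b (int i) u)))"

definition iterate_cutoff :: "(sl2 \<times> nat) list \<Rightarrow> int \<Rightarrow> 'm \<Rightarrow> nat \<Rightarrow> bool" where
  "iterate_cutoff w k u S \<longleftrightarrow>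
     (\<forall>i\<ge>S. Y w (k + int i) u = 0) \<and> (\<forall>b i. S \<le> i \<longrightarrow> act b (int i) u = 0)"

lemma iterate_cutoff_mono:
  assumes "iterate_cutoff w k u S" "S \<le> S'" "k \<le> k'"
  shows "iterate_cutoff w k' u S'"
  unfolding iterate_cutoff_def
proof (intro conjI allI impI)
  fix i assume "S' \<le> i"
  moreover have "k' + int i = k + int (i + nat (k' - k))" using assms(3) by simp
  ultimately show "Y w (k' + int i) u = 0"
    using assms(1,2) unfolding iterate_cutoff_def by (metis le_add1 order.trans)
next
  fix b i assume "S' \<le> i"
  then show "act b (int i) u = 0" using assms(1,2) unfolding iterate_cutoff_def by auto
qed

lemma Y_Cons_eq_sum:
  assumes "iterate_cutoff w k u S" and "\<And>j. Y w j 0 = 0"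
  shows "Y ((b, n) # w) k u = (\<Sum>i<S. iterate_term b n w k u i)"
proof -
  have "{i. iterate_term b n w k u i \<noteq> 0} \<subseteq> {..<S}"
  proof
    fix i assume "i \<in> {i. iterate_term b n w k u i \<noteq> 0}"
    moreover have "S \<le> i \<Longrightarrow> iterate_term b n w k u i = 0"
      using assms unfolding iterate_cutoff_def iterate_term_def by simp
    ultimately show "i \<in> {..<S}" by force
  qed
  then show ?thesis
    by (simp add: Sum_any.expand_superset[of "{..<S}"] iterate_term_def)
qed

lemma iterate_cutoff_if_eventually_zero:
  assumes "\<exists>T. \<forall>k\<ge>T. Y w k u = 0"
  shows "\<exists>S. iterate_cutoff w k u S"
proof -
  obtain T where T: "\<forall>k\<ge>T. Y w k u = 0" using assms by blast
  obtain N where N: "\<forall>b. \<forall>n\<ge>N. act b (int n) u = 0" using act_eventually_zero_all by blast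
  show ?thesis
    by (rule exI[of _ "max (nat (T - k)) N"]) (auto simp: iterate_cutoff_def T N)
qed

lemma Y_Cons_eventually_zero:
  assumes zero: "\<And>j. Y w j 0 = 0" and trunc: "\<And>v. \<exists>T. \<forall>k\<ge>T. Y w k v = 0"
  shows "\<exists>T. \<forall>k\<ge>T. Y ((b, n) # w) k u = 0"
proof -
  obtain N where N: "\<forall>b. \<forall>i\<ge>N. act b (int i) u = 0" using act_eventually_zero_all by blast
  obtain T0 where T0: "\<forall>k\<ge>T0. Y w k u = 0" using trunc by blast
  have "\<forall>i. \<exists>T. \<forall>k\<ge>T. Y w k (act b (int i) u) = 0" using trunc by blast
  then obtain Tb where Tb: "\<forall>i. \<forall>k\<ge>Tb i. Y w k (act b (int i) u) = 0"
    by (rule choice[THEN exE]) blast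
  define T1 where "T1 = Max (Tb ` {..<N})"
  have T1: "Tb i \<le> T1" if "i < N" for i
    unfolding T1_def using that by (intro Max_ge) auto
  show ?thesis
  proof (intro exI allI impI)
    fix k assume k: "max T0 (T1 + int n + int N) \<le> k"
    have cut: "iterate_cutoff w k u N" unfolding iterate_cutoff_def using N T0 k by auto
    have "iterate_term b n w k u i = 0" if "i < N" for i
      unfolding iterate_term_def using T0 Tb T1[OF that] k that by auto
    then show "Y ((b, n) # w) k u = 0"
      unfolding Y_Cons_eq_sum[OF cut zero] by simp
  qed
qed

lemma Y_Cons_linear:
  assumes add: "\<And>k x y. Y w k (x + y) = Y w k x + Y w k y"
    and sc: "\<And>k c x. Y w k (scale c x) = scale c (Y w k x)"
    and trunc: "\<And>u. \<exists>T. \<forall>k\<ge>T. Y w k u = 0"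
  shows "Y ((b, n) # w) k (x + y) = Y ((b, n) # w) k x + Y ((b, n) # w) k y"
    and "Y ((b, n) # w) k (scale c x) = scale c (Y ((b, n) # w) k x)"
proof -
  have zero: "\<And>j. Y w j 0 = 0" using sc[of _ 0 0] by simp
  have cutoff: "\<exists>S. iterate_cutoff w k u S" for k u
    using iterate_cutoff_if_eventually_zero trunc by blast
  show "Y ((b, n) # w) k (x + y) = Y ((b, n) # w) k x + Y ((b, n) # w) k y"
  proof -
    obtain S1 S2 S3 where "iterate_cutoff w k x S1" "iterate_cutoff w k y S2"
      "iterate_cutoff w k (x + y) S3" using cutoff by metis
    then have cx: "iterate_cutoff w k x (max S1 (max S2 S3))"
      and cy: "iterate_cutoff w k y (max S1 (max S2 S3))"
      and cxy: "iterate_cutoff w k (x + y) (max S1 (max S2 S3))"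
      using iterate_cutoff_mono by auto
    have "iterate_term b n w k (x + y) i = iterate_term b n w k x i + iterate_term b n w k y i" for i
      unfolding iterate_term_def
      by (simp add: add act_add algebra_simps)
    then show ?thesis
      unfolding Y_Cons_eq_sum[OF cx zero] Y_Cons_eq_sum[OF cy zero] Y_Cons_eq_sum[OF cxy zero]
      by (simp add: sum.distrib)
  qed
  show "Y ((b, n) # w) k (scale c x) = scale c (Y ((b, n) # w) k x)"
  proof -
    obtain S1 S2 where "iterate_cutoff w k x S1" "iterate_cutoff w k (scale c x) S2"
      using cutoff by metis
    then have cx: "iterate_cutoff w k x (max S1 S2)"
      and ccx: "iterate_cutoff w k (scale c x) (max S1 S2)"
      using iterate_cutoff_mono by auto
    have "iterate_term b n w k (scale c x) i = scale c (iterate_term b n w k x i)" for i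
      unfolding iterate_term_def
      by (simp add: sc act_scale scale_right_diff_distrib scale_left_commute mult_ac)
    then show ?thesis
      unfolding Y_Cons_eq_sum[OF cx zero] Y_Cons_eq_sum[OF ccx zero]
      by (simp add: scale_sum_right)
  qed
qed

lemma Y_linear_eventually_zero:
  "(\<forall>k x y. Y w k (x + y) = Y w k x + Y w k y) \<and>
   (\<forall>k c x. Y w k (scale c x) = scale c (Y w k x)) \<and>
   (\<forall>u. \<exists>T. \<forall>k\<ge>T. Y w k u = 0)"
proof (induction w)
  case Nil
  have "\<exists>T. \<forall>k\<ge>T. Y [] k u = 0" for u by (rule exI[of _ 0]) simp
  then show ?case by auto
next
  case (Cons p w)
  obtain b n where p: "p = (b, n)" by (cases p)
  have add: "\<And>k x y. Y w k (x + y) = Y w k x + Y w k y"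
    and sc: "\<And>k c x. Y w k (scale c x) = scale c (Y w k x)"
    and trunc: "\<And>u. \<exists>T. \<forall>k\<ge>T. Y w k u = 0" using Cons.IH by auto
  have zero: "\<And>j. Y w j 0 = 0" using sc[of _ 0 0] by simp
  have "Y (p # w) k (x + y) = Y (p # w) k x + Y (p # w) k y"
    and "Y (p # w) k (scale c x) = scale c (Y (p # w) k x)" for k x y c
    unfolding p using Y_Cons_linear[OF add sc trunc] by blast+
  moreover have "\<exists>T. \<forall>k\<ge>T. Y (p # w) k u = 0" for u
    unfolding p using Y_Cons_eventually_zero[OF zero trunc] .
  ultimately show ?case by blast
qed

lemma Y_add: "Y w k (x + y) = Y w k x + Y w k y"
  using Y_linear_eventually_zero by blast

lemma Y_scale: "Y w k (scale c x) = scale c (Y w k x)"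
  using Y_linear_eventually_zero by blast

lemma Y_eventually_zero: "\<exists>T. \<forall>k\<ge>T. Y w k u = 0"
  using Y_linear_eventually_zero by blast

lemma Y_zero [simp]: "Y w k 0 = 0"
  using Y_scale[of w k 0 0] by simp

lemma Y_neg: "Y w k (- x) = - Y w k x"
  using Y_scale[of w k "-1" x] by simp

lemma iterate_cutoff_exists: "\<exists>S. iterate_cutoff w k u S"
  using iterate_cutoff_if_eventually_zero Y_eventually_zero by blast

lemma iterate_cutoff_list: "\<exists>S. \<forall>x\<in>set L. iterate_cutoff (snd x) k u S"
proof (induction L)
  case Nil then show ?case by simp
next
  case (Cons a L)
  obtain S1 where S1: "\<forall>x\<in>set L. iterate_cutoff (snd x) k u S1" using Cons by blast
  obtain S2 where S2: "iterate_cutoff (snd a) k u S2" using iterate_cutoff_exists by blast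
  show ?case
    by (rule exI[of _ "max S1 S2"]) (use S1 S2 iterate_cutoff_mono in auto)
qed

lemma Y_Cons: "iterate_cutoff w k u S \<Longrightarrow> Y ((b, n) # w) k u = (\<Sum>i<S. iterate_term b n w k u i)"
  using Y_Cons_eq_sum by simp

text \<open>\<open>res_binom w A B u\<close> is Res_x (1 + x)^A x^B Y(w, x) u.\<close>
definition res_binom :: "(sl2 \<times> nat) list \<Rightarrow> nat \<Rightarrow> int \<Rightarrow> 'm \<Rightarrow> 'm" where
  "res_binom w A B u = (\<Sum>j\<le>A. scale (of_nat (A choose j)) (Y w (int j + B) u))"

lemma res_binom_shift:
  "res_binom w A (B + int i) u = (\<Sum>j\<le>A. scale (of_nat (A choose j)) (Y w (B + int (i + j)) u))"
  unfolding res_binom_def by (simp add: algebra_simps)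

lemma res_binom_eq_sum_lessThan:
  assumes "\<forall>t\<ge>S. Y w (B + int t) u = 0"
  shows "res_binom w A B u = (\<Sum>t<S. scale (of_nat (A choose t)) (Y w (B + int t) u))"
proof -
  let ?g = "\<lambda>t. scale (of_nat (A choose t)) (Y w (B + int t) u)"
  have "res_binom w A B u = (\<Sum>t<Suc A. ?g t)"
    unfolding res_binom_def lessThan_Suc_atMost by (simp add: add.commute)
  also have "\<dots> = (\<Sum>t<max S (Suc A). ?g t)"
    by (rule sum.mono_neutral_left) auto
  also have "\<dots> = (\<Sum>t<S. ?g t)"
    by (rule sum.mono_neutral_right) (use assms in auto)
  finally show ?thesis .
qed

lemma sum_scale_Cauchy_product:
  fixes f g :: "nat \<Rightarrow> complex" and h :: "nat \<Rightarrow> 'm"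
  assumes "\<forall>t\<ge>S. h t = 0"
  shows "(\<Sum>i<S. scale (f i) (\<Sum>j\<le>A. scale (g j) (h (i + j))))
       = (\<Sum>t<S. scale (\<Sum>i\<le>t. f i * (if t - i \<le> A then g (t - i) else 0)) (h t))"
proof -
  let ?g' = "\<lambda>j. if j \<le> A then g j else 0"
  have fin: "finite {(i, j). i + j < S}"
    by (rule finite_subset[of _ "{..<S} \<times> {..<S}"]) auto
  have "(\<Sum>i<S. scale (f i) (\<Sum>j\<le>A. scale (g j) (h (i + j))))
      = (\<Sum>(i, j)\<in>{..<S} \<times> {..A}. scale (f i * g j) (h (i + j)))"
    by (simp add: scale_sum_right sum.cartesian_product)
  also have "\<dots> = (\<Sum>(i, j)\<in>{(i, j). i + j < S \<and> j \<le> A}. scale (f i * g j) (h (i + j)))"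
    by (rule sum.mono_neutral_right) (use assms in \<open>auto, metis not_less\<close>)
  also have "\<dots> = (\<Sum>(i, j)\<in>{(i, j). i + j < S}. scale (f i * ?g' j) (h (i + j)))"
    by (rule sum.mono_neutral_cong_left) (use fin in \<open>auto split: if_splits\<close>)
  also have "\<dots> = (\<Sum>t<S. \<Sum>i\<le>t. scale (f i * ?g' (t - i)) (h (i + (t - i))))"
    by (rule sum.triangle_reindex)
  finally show ?thesis by (simp add: scale_sum_left)
qed

text \<open>(1 + x)^(A + r) = (1 + x)^A (1 + x)^r.\<close>
lemma res_binom_add_exponent:
  "res_binom c (A + r) B v = (\<Sum>j\<le>r. scale (of_nat (r choose j)) (res_binom c A (B + int j) v))"
proof -
  obtain T where T: "\<forall>k\<ge>T. Y c k v = 0" using Y_eventually_zero by blast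
  define S where "S = max (nat (T - B)) (Suc (A + r))"
  have vanish: "\<forall>t\<ge>S. Y c (B + int t) v = 0" using T unfolding S_def by auto
  have coeff: "(\<Sum>i\<le>t. of_nat (r choose i) * (if t - i \<le> A then of_nat (A choose (t - i)) else 0))
      = (of_nat ((r + A) choose t) :: complex)" for t
  proof -
    have "(\<Sum>i\<le>t. of_nat (r choose i) * (if t - i \<le> A then of_nat (A choose (t - i)) else 0))
        = (of_nat (\<Sum>i\<le>t. (r choose i) * (A choose (t - i))) :: complex)"
      by (auto intro: sum.cong)
    then show ?thesis by (simp only: vandermonde)
  qed
  have "(\<Sum>j\<le>r. scale (of_nat (r choose j)) (res_binom c A (B + int j) v))
      = (\<Sum>j<S. scale (of_nat (r choose j)) (res_binom c A (B + int j) v))"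
    by (rule sum.mono_neutral_cong_left) (auto simp: S_def)
  also have "\<dots> = (\<Sum>t<S. scale (of_nat ((r + A) choose t)) (Y c (B + int t) v))"
    unfolding res_binom_shift coeff[symmetric]
    by (rule sum_scale_Cauchy_product[where h="\<lambda>t. Y c (B + int t) v"]) (use vanish in auto)
  also have "\<dots> = res_binom c (A + r) B v"
    using res_binom_eq_sum_lessThan[OF vanish, of "A + r"] by (simp add: add.commute)
  finally show ?thesis by simp
qed

text \<open>(1 + x)^-n (1 + x)^(A + n) = (1 + x)^A, with
  (1 + x)^-n = sum_i (-1)^i (n - 1 + i choose i) x^i.\<close>
lemma res_binom_neg_binomial:
  assumes vanish: "\<forall>t\<ge>S. Y c (B + int t) u = 0" and n: "1 \<le> n"
  shows "(\<Sum>i<S. scale ((-1)^i * iterate_coeff n i) (res_binom c (A + n) (B + int i) u))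
       = res_binom c A B u"
proof -
  have coeff: "(\<Sum>i\<le>t. (-1)^i * iterate_coeff n i
        * (if t - i \<le> A + n then of_nat ((A + n) choose (t - i)) else 0))
      = (of_nat (A choose t) :: complex)" for t
  proof -
    have "(\<Sum>i\<le>t. (-1)^i * iterate_coeff n i
          * (if t - i \<le> A + n then of_nat ((A + n) choose (t - i)) else 0))
        = (\<Sum>i\<le>t. (-1)^i * iterate_coeff n i * (of_nat ((A + n) choose (t - i)) :: complex))"
      by (rule sum.cong) auto
    then show ?thesis using neg_binomial_Vandermonde[OF n] by simp
  qed
  have "(\<Sum>i<S. scale ((-1)^i * iterate_coeff n i) (res_binom c (A + n) (B + int i) u))
      = (\<Sum>t<S. scale (of_nat (A choose t)) (Y c (B + int t) u))"
    unfolding res_binom_shift coeff[symmetric]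
    by (rule sum_scale_Cauchy_product[where h="\<lambda>t. Y c (B + int t) u"]) (use vanish in auto)
  also have "\<dots> = res_binom c A B u"
    using res_binom_eq_sum_lessThan[OF vanish, of A] by simp
  finally show ?thesis .
qed

lemma res_binom_Cons:
  assumes "iterate_cutoff c B u S"
  shows "res_binom ((b, n) # c) G B u = (\<Sum>i<S. scale (iterate_coeff n i)
     (act b (- int n - int i) (res_binom c G (B + int i) u)
      - scale ((-1) ^ n) (res_binom c G (B - int n - int i) (act b (int i) u))))"
proof -
  have "res_binom ((b, n) # c) G B u
      = (\<Sum>j\<le>G. scale (of_nat (G choose j)) (\<Sum>i<S. iterate_term b n c (int j + B) u i))"
    unfolding res_binom_def
  proof (rule sum.cong[OF refl])
    fix j
    have "iterate_cutoff c (int j + B) u S" by (rule iterate_cutoff_mono[OF assms]) auto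
    then show "scale (of_nat (G choose j)) (Y ((b, n) # c) (int j + B) u)
        = scale (of_nat (G choose j)) (\<Sum>i<S. iterate_term b n c (int j + B) u i)"
      by (simp only: Y_Cons)
  qed
  also have "\<dots> = (\<Sum>i<S. \<Sum>j\<le>G. scale (of_nat (G choose j)) (iterate_term b n c (int j + B) u i))"
    by (simp add: scale_sum_right sum.swap[of _ "{..G}"])
  finally show ?thesis
    unfolding iterate_term_def res_binom_def act_sum act_scale
    by (simp add: scale_sum_right sum_subtractf scale_left_commute algebra_simps)
qed

lemma res_binom_Cons_split:
  assumes "iterate_cutoff c B u S"
  shows "res_binom ((b, n) # c) G B u
     = (\<Sum>i<S. scale (iterate_coeff n i) (act b (- int n - int i) (res_binom c G (B + int i) u)))
     - scale ((-1) ^ n) (\<Sum>i<S. scale (iterate_coeff n i)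
         (res_binom c G (B - int n - int i) (act b (int i) u)))"
  unfolding res_binom_Cons[OF assms]
  by (simp add: scale_right_diff_distrib sum_subtractf scale_sum_right mult.commute)

lemma f0_iterate_term:
  assumes IH: "\<And>k u. act F 0 (Y c k u) = Y c k (act F 0 u) + (\<Sum>(\<alpha>, w)\<leftarrow>f0_on_word c. scale \<alpha> (Y w k u))"
  shows "act F 0 (iterate_term b n c k u i) = iterate_term b n c k (act F 0 u) i
     + scale (iterate_coeff n i)
        (bracket_act scale act F b (- int n - int i) (Y c (k + int i) u)
         - scale ((-1) ^ n) (Y c (k - int n - int i) (bracket_act scale act F b (int i) u)))
     + (\<Sum>(\<alpha>, w)\<leftarrow>f0_on_word c. scale \<alpha> (iterate_term b n w k u i))"
proof -
  let ?p = "- int n - int i" and ?k1 = "k + int i" and ?k2 = "k - int n - int i"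
  have e1: "act F 0 (act b ?p (Y c ?k1 u)) = act b ?p (Y c ?k1 (act F 0 u))
      + (\<Sum>(\<alpha>, w)\<leftarrow>f0_on_word c. scale \<alpha> (act b ?p (Y w ?k1 u)))
      + bracket_act scale act F b ?p (Y c ?k1 u)"
    by (simp add: zero_mode_commute IH act_add act_sum_list act_scale case_prod_unfold)
  have e2: "act F 0 (Y c ?k2 (act b (int i) u)) = Y c ?k2 (act b (int i) (act F 0 u))
      + Y c ?k2 (bracket_act scale act F b (int i) u)
      + (\<Sum>(\<alpha>, w)\<leftarrow>f0_on_word c. scale \<alpha> (Y w ?k2 (act b (int i) u)))"
    by (simp add: zero_mode_commute IH Y_add)
  have e3: "(\<Sum>(\<alpha>, w)\<leftarrow>f0_on_word c. scale \<alpha> (iterate_term b n w k u i))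
     = scale (iterate_coeff n i)
        ((\<Sum>(\<alpha>, w)\<leftarrow>f0_on_word c. scale \<alpha> (act b ?p (Y w ?k1 u)))
        - scale ((-1) ^ n) (\<Sum>(\<alpha>, w)\<leftarrow>f0_on_word c. scale \<alpha> (Y w ?k2 (act b (int i) u))))"
    unfolding iterate_term_def
    by (simp add: scale_sum_list case_prod_unfold scale_right_diff_distrib sum_list_subtractf
        scale_left_commute mult_ac)
  show ?thesis
    unfolding e3 unfolding iterate_term_def act_scale act_diff e1 e2
    by (simp add: algebra_simps)
qed

lemma f_bracket_iterate_terms:
  assumes cut: "iterate_cutoff c k u S"
  shows "(\<Sum>i<S. scale (iterate_coeff n i)
        (bracket_act scale act F b (- int n - int i) (Y c (k + int i) u)
         - scale ((-1) ^ n) (Y c (k - int n - int i) (bracket_act scale act F b (int i) u))))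
     = (\<Sum>(\<alpha>, w)\<leftarrow>(case b of E \<Rightarrow> [(-1, (H, n) # c)] | H \<Rightarrow> [(2, (F, n) # c)] | F \<Rightarrow> []).
          scale \<alpha> (Y w k u))"
proof (cases b)
  case E
  have "scale (iterate_coeff n i)
        (bracket_act scale act F b (- int n - int i) (Y c (k + int i) u)
         - scale ((-1) ^ n) (Y c (k - int n - int i) (bracket_act scale act F b (int i) u)))
      = scale (-1) (iterate_term H n c k u i)" for i
    unfolding iterate_term_def E
    by (simp add: act_scale Y_scale Y_neg scale_right_diff_distrib scale_left_commute)
  then show ?thesis using E Y_Cons[OF cut, of H n] by (simp add: scale_sum_right sum_negf)
next
  case H
  have "scale (iterate_coeff n i)
        (bracket_act scale act F b (- int n - int i) (Y c (k + int i) u)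
         - scale ((-1) ^ n) (Y c (k - int n - int i) (bracket_act scale act F b (int i) u)))
      = scale 2 (iterate_term F n c k u i)" for i
    unfolding iterate_term_def H
    by (simp add: act_scale Y_scale scale_right_diff_distrib scale_left_commute mult_ac)
  then show ?thesis using H Y_Cons[OF cut, of F n] by (simp add: scale_sum_right)
next
  case F
  then show ?thesis by simp
qed

text \<open>[f(0), Y(c, x)] = Y(f(0) c, x), as f(0) acts on V(l, C) as a derivation of all products.\<close>
lemma f0_Y_commute:
  "act F 0 (Y c k u) = Y c k (act F 0 u) + (\<Sum>(\<alpha>, w)\<leftarrow>f0_on_word c. scale \<alpha> (Y w k u))"
proof (induction c arbitrary: k u)
  case Nil then show ?case by simp
next
  case (Cons p c)
  obtain b n where p: "p = (b, n)" by (cases p)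
  obtain S1 S2 S3 where "iterate_cutoff c k u S1" "iterate_cutoff c k (act F 0 u) S2"
    "\<forall>x\<in>set (f0_on_word c). iterate_cutoff (snd x) k u S3"
    using iterate_cutoff_exists iterate_cutoff_list by metis
  then obtain S where cut: "iterate_cutoff c k u S" and cutf: "iterate_cutoff c k (act F 0 u) S"
    and cutw: "\<forall>x\<in>set (f0_on_word c). iterate_cutoff (snd x) k u S"
    using iterate_cutoff_mono[of _ _ _ _ "max S1 (max S2 S3)"]
    by (meson max.cobounded1 max.cobounded2 order.trans order_refl)
  have word_terms: "(\<Sum>i<S. \<Sum>(\<alpha>, w)\<leftarrow>f0_on_word c. scale \<alpha> (iterate_term b n w k u i))
      = (\<Sum>(\<alpha>, w)\<leftarrow>f0_on_word c. scale \<alpha> (Y ((b, n) # w) k u))"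
    unfolding sum_sum_list_swap case_prod_unfold
  proof (rule arg_cong[where f=sum_list], rule map_cong[OF refl])
    fix x assume "x \<in> set (f0_on_word c)"
    then have "Y ((b, n) # snd x) k u = (\<Sum>i<S. iterate_term b n (snd x) k u i)"
      using cutw Y_Cons by blast
    then show "(\<Sum>i<S. scale (fst x) (iterate_term b n (snd x) k u i))
        = scale (fst x) (Y ((b, n) # snd x) k u)"
      by (simp only: scale_sum_right)
  qed
  have "act F 0 (Y (p # c) k u) = (\<Sum>i<S. act F 0 (iterate_term b n c k u i))"
    unfolding p Y_Cons[OF cut] act_sum ..
  also have "\<dots> = Y (p # c) k (act F 0 u) + (\<Sum>(\<alpha>, w)\<leftarrow>f0_on_word (p # c). scale \<alpha> (Y w k u))"
    unfolding f0_iterate_term[OF Cons.IH] sum.distrib f_bracket_iterate_terms[OF cut] word_terms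
      p Y_Cons[OF cutf, symmetric]
    by (simp add: case_prod_unfold o_def add.assoc)
  finally show ?case .
qed

lemma f0_res_binom_commute:
  "act F 0 (res_binom c A B u)
     = res_binom c A B (act F 0 u) + (\<Sum>(\<alpha>, w)\<leftarrow>f0_on_word c. scale \<alpha> (res_binom w A B u))"
proof -
  have "act F 0 (res_binom c A B u)
      = (\<Sum>j\<le>A. scale (of_nat (A choose j)) (Y c (int j + B) (act F 0 u)))
      + (\<Sum>j\<le>A. \<Sum>x\<leftarrow>f0_on_word c.
           scale (of_nat (A choose j)) (scale (fst x) (Y (snd x) (int j + B) u)))"
    unfolding res_binom_def act_sum act_scale f0_Y_commute
    by (simp add: scale_right_distrib sum.distrib scale_sum_list case_prod_unfold)
  also have "\<dots> = res_binom c A B (act F 0 u) + (\<Sum>(\<alpha>, w)\<leftarrow>f0_on_word c. scale \<alpha> (res_binom w A B u))"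
    unfolding sum_sum_list_swap res_binom_def
    by (simp add: case_prod_unfold scale_sum_right scale_left_commute mult.commute)
  finally show ?thesis .
qed

definition O_generators :: "'m set" where
  "O_generators = {act F (- m) u + act F (1 - m) u | m u. m > 0}
      \<union> {act E (- m) u | m u. m > 0}
      \<union> {act H (- m - 1) u + act H (- m) u | m u. m > 0}"

abbreviation W :: "'m set" where
  "W \<equiv> span O_generators"

lemma f_pair_in_W: "0 < m \<Longrightarrow> act F (- m) u + act F (1 - m) u \<in> W"
  unfolding O_generators_def by (rule span_base) blast

lemma e_mode_in_W: "0 < m \<Longrightarrow> act E (- m) u \<in> W"
  unfolding O_generators_def by (rule span_base) blast

lemma h_pair_in_W: "0 < m \<Longrightarrow> act H (- m - 1) u + act H (- m) u \<in> W"
  unfolding O_generators_def by (rule span_base) blast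

lemma f_mode_congruence: "act F (- int p) v - scale ((-1)^p) (act F 0 v) \<in> W"
proof (induction p)
  case 0 then show ?case by (simp add: span_zero)
next
  case (Suc p)
  have "act F (- int (Suc p)) v - scale ((-1)^Suc p) (act F 0 v)
     = (act F (- int (Suc p)) v + act F (1 - int (Suc p)) v)
       - (act F (- int p) v - scale ((-1)^p) (act F 0 v))"
    by (simp add: algebra_simps)
  also have "\<dots> \<in> W"
    by (rule span_diff[OF f_pair_in_W Suc.IH]) simp
  finally show ?case .
qed

lemma h_mode_congruence: "act H (- int (Suc q)) v - scale ((-1)^q) (act H (-1) v) \<in> W"
proof (induction q)
  case 0 then show ?case by (simp add: span_zero)
next
  case (Suc q)
  have "act H (- int (Suc (Suc q))) v - scale ((-1)^Suc q) (act H (-1) v)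
     = (act H (- int (Suc q) - 1) v + act H (- int (Suc q)) v)
       - (act H (- int (Suc q)) v - scale ((-1)^q) (act H (-1) v))"
    by (simp add: algebra_simps)
  also have "\<dots> \<in> W"
    by (rule span_diff[OF h_pair_in_W Suc.IH]) simp
  finally show ?case .
qed

lemma f_modes_sum_congruence:
  "(\<Sum>i<S. scale (C i) (act F (- int n - int i) (X i)))
     - scale ((-1) ^ n) (act F 0 (\<Sum>i<S. scale ((-1) ^ i * C i) (X i))) \<in> W"
proof -
  have "act F (- int n - int i) (X i) - scale ((-1) ^ (n + i)) (act F 0 (X i)) \<in> W" for i
    using f_mode_congruence[of "n + i" "X i"] by simp
  then have "(\<Sum>i<S. scale (C i)
      (act F (- int n - int i) (X i) - scale ((-1) ^ (n + i)) (act F 0 (X i)))) \<in> W"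
    by (intro span_sum span_scale)
  then show ?thesis
    by (simp add: scale_right_diff_distrib sum_subtractf act_sum act_scale scale_sum_right power_add mult_ac)
qed

lemma h_modes_sum_congruence:
  assumes "1 \<le> n"
  shows "(\<Sum>i<S. scale (C i) (act H (- int n - int i) (X i)))
     - scale ((-1) ^ (n - 1)) (act H (-1) (\<Sum>i<S. scale ((-1) ^ i * C i) (X i))) \<in> W"
proof -
  have "act H (- int n - int i) (X i) - scale ((-1) ^ (n - 1 + i)) (act H (-1) (X i)) \<in> W" for i
    using h_mode_congruence[of "n - 1 + i" "X i"] assms by simp
  then have "(\<Sum>i<S. scale (C i)
      (act H (- int n - int i) (X i) - scale ((-1) ^ (n - 1 + i)) (act H (-1) (X i)))) \<in> W"
    by (intro span_sum span_scale)
  then show ?thesis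
    by (simp add: scale_right_diff_distrib sum_subtractf act_sum act_scale scale_sum_right power_add mult_ac)
qed

lemma h_minus_one_preserves_W:
  assumes "x \<in> W"
  shows "act H (-1) x \<in> W"
proof -
  have sub: "subspace {x. act H (-1) x \<in> W}"
    unfolding subspace_def by (auto simp: act_add act_scale span_add span_scale span_zero)
  have base: "act H (-1) x \<in> W" if gen: "x \<in> O_generators" for x
  proof -
    consider (f) m u where "m > 0" "x = act F (- m) u + act F (1 - m) u"
      | (e) m u where "m > 0" "x = act E (- m) u"
      | (h) m u where "m > 0" "x = act H (- m - 1) u + act H (- m) u"
      using gen unfolding O_generators_def by blast
    then show ?thesis
    proof cases
      case f
      then have "act H (-1) x = (act F (- m) (act H (-1) u) + act F (1 - m) (act H (-1) u))
              + scale (-2) (act F (- (m + 1)) u + act F (1 - (m + 1)) u)"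
        by (simp add: h_f_commute act_add algebra_simps)
      also have "\<dots> \<in> W"
        using f by (intro span_add span_scale f_pair_in_W) simp_all
      finally show ?thesis .
    next
      case e
      then have "act H (-1) x = act E (- m) (act H (-1) u) + scale 2 (act E (- (m + 1)) u)"
        by (simp add: h_e_commute algebra_simps)
      also have "\<dots> \<in> W"
        using e by (intro span_add span_scale e_mode_in_W) simp_all
      finally show ?thesis .
    next
      case h
      then have "act H (-1) x = act H (- m - 1) (act H (-1) u) + act H (- m) (act H (-1) u)"
        by (simp add: h_h_commute act_add)
      also have "\<dots> \<in> W"
        using h by (intro h_pair_in_W) simp
      finally show ?thesis .
    qed
  qed
  show ?thesis
    using assms by (induction rule: span_induct) (use sub base in auto)
qed

end

locale sl2_affine_module_shifted = sl2_affine_module +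
  fixes z :: rat
  assumes z_pos: "0 < z" and z_less_one: "z < 1"
begin

abbreviation wt :: "(sl2 \<times> nat) list \<Rightarrow> rat" where
  "wt \<equiv> word_wt z"

definition wt_floor :: "(sl2 \<times> nat) list \<Rightarrow> nat" where
  "wt_floor w = nat \<lfloor>wt w\<rfloor>"

definition wt_eps :: "(sl2 \<times> nat) list \<Rightarrow> int" where
  "wt_eps w = eps_wt (wt w)"

lemma wt_floor_int: "valid_word w \<Longrightarrow> int (wt_floor w) = \<lfloor>wt w\<rfloor>"
  using word_wt_nonneg[of z w] z_pos z_less_one by (simp add: wt_floor_def)

text \<open>The elements of O(M) are the case B = -1 - eps(w); allowing every smaller B is what
  makes the induction on the length of w go through.\<close>
definition residues_in_W :: "(sl2 \<times> nat) list \<Rightarrow> bool" where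
  "residues_in_W w \<longleftrightarrow> (\<forall>B v. B \<le> -1 - wt_eps w \<longrightarrow> res_binom w (wt_floor w) B v \<in> W)"

lemma res_binom_in_W:
  assumes "residues_in_W c" "valid_word c"
    and "\<lfloor>wt c\<rfloor> \<le> int G" "B + int G \<le> \<lfloor>wt c\<rfloor> - 1 - wt_eps c"
  shows "res_binom c G B v \<in> W"
proof -
  define r where "r = G - wt_floor c"
  have G: "G = wt_floor c + r" using assms(3) wt_floor_int[OF assms(2)] unfolding r_def by linarith
  have "res_binom c G B v = (\<Sum>j\<le>r. scale (of_nat (r choose j)) (res_binom c (wt_floor c) (B + int j) v))"
    unfolding G by (rule res_binom_add_exponent)
  also have "\<dots> \<in> W"
  proof (intro span_sum span_scale)
    fix j assume "j \<in> {..r}"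
    then have "B + int j \<le> -1 - wt_eps c" using G assms(4) wt_floor_int[OF assms(2)] by auto
    then show "res_binom c (wt_floor c) (B + int j) v \<in> W"
      using assms(1) unfolding residues_in_W_def by blast
  qed
  finally show ?thesis .
qed

lemma residues_in_W_Cons_E:
  assumes valid: "valid_word ((E, n) # c)" and IH: "residues_in_W c"
  shows "residues_in_W ((E, n) # c)"
  unfolding residues_in_W_def
proof (intro allI impI)
  let ?a = "(E, n) # c"
  fix B u assume B: "B \<le> -1 - wt_eps ?a"
  have n: "1 \<le> n" and valid_c: "valid_word c" using valid by auto
  have wa: "wt ?a = of_nat n + (wt c - z)" by simp
  have K: "int (wt_floor ?a) = int n + \<lfloor>wt c - z\<rfloor>"
    using wt_floor_int[OF valid, unfolded wa] by simp
  obtain S where cut: "iterate_cutoff c B u S" using iterate_cutoff_exists by blast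
  have "res_binom ?a (wt_floor ?a) B u
     = (\<Sum>i<S. scale (iterate_coeff n i)
          (act E (- int n - int i) (res_binom c (wt_floor ?a) (B + int i) u)))
     - scale ((-1) ^ n) (\<Sum>i<S. scale (iterate_coeff n i)
         (res_binom c (wt_floor ?a) (B - int n - int i) (act E (int i) u)))"
    by (rule res_binom_Cons_split[OF cut])
  also have "\<dots> \<in> W"
  proof (intro span_diff span_scale span_sum)
    fix i
    show "act E (- int n - int i) (res_binom c (wt_floor ?a) (B + int i) u) \<in> W"
      using e_mode_in_W[of "int n + int i"] n by simp
    show "res_binom c (wt_floor ?a) (B - int n - int i) (act E (int i) u) \<in> W"
    proof (rule res_binom_in_W[OF IH valid_c])
      show "\<lfloor>wt c\<rfloor> \<le> int (wt_floor ?a)"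
        using K floor_minus_frac_ge[OF z_less_one, of "wt c"] n by simp
      show "B - int n - int i + int (wt_floor ?a) \<le> \<lfloor>wt c\<rfloor> - 1 - wt_eps c"
        using K B floor_minus_frac_add_eps_wt[OF z_pos z_less_one, of "wt c"] eps_wt_nonneg[of "wt ?a"]
        unfolding wt_eps_def by simp
    qed
  qed
  finally show "res_binom ?a (wt_floor ?a) B u \<in> W" .
qed

lemma h_leading_terms_in_W:
  assumes IH: "residues_in_W c" and cut: "iterate_cutoff c B u S"
    and n: "1 \<le> n" and B: "B \<le> -1 - wt_eps c"
  shows "(\<Sum>i<S. scale (iterate_coeff n i)
            (act H (- int n - int i) (res_binom c (wt_floor c + n) (B + int i) u))) \<in> W"
proof -
  let ?X = "\<lambda>i. res_binom c (wt_floor c + n) (B + int i) u"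
  have "(\<Sum>i<S. scale ((-1) ^ i * iterate_coeff n i) (?X i)) = res_binom c (wt_floor c) B u"
    by (rule res_binom_neg_binomial[OF _ n]) (use cut in \<open>simp add: iterate_cutoff_def\<close>)
  moreover have "res_binom c (wt_floor c) B u \<in> W"
    using IH B unfolding residues_in_W_def by simp
  ultimately have
    "scale ((-1) ^ (n - 1)) (act H (-1) (\<Sum>i<S. scale ((-1) ^ i * iterate_coeff n i) (?X i))) \<in> W"
    by (simp add: span_scale h_minus_one_preserves_W)
  from span_add[OF h_modes_sum_congruence[OF n, of "iterate_coeff n" ?X S] this] show ?thesis by simp
qed

lemma residues_in_W_Cons_H:
  assumes valid: "valid_word ((H, n) # c)" and IH: "residues_in_W c"
  shows "residues_in_W ((H, n) # c)"
  unfolding residues_in_W_def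
proof (intro allI impI)
  let ?a = "(H, n) # c"
  fix B u assume B: "B \<le> -1 - wt_eps ?a"
  have n: "1 \<le> n" and valid_c: "valid_word c" using valid by auto
  have wa: "wt ?a = of_nat n + wt c" by simp
  have K: "wt_floor ?a = wt_floor c + n"
    using wt_floor_int[OF valid] wt_floor_int[OF valid_c] wa by simp
  have eps: "wt_eps ?a = wt_eps c"
    unfolding wt_eps_def wa by (rule eps_wt_of_nat_add)
  obtain S where cut: "iterate_cutoff c B u S" using iterate_cutoff_exists by blast
  have "res_binom ?a (wt_floor ?a) B u
     = (\<Sum>i<S. scale (iterate_coeff n i)
          (act H (- int n - int i) (res_binom c (wt_floor c + n) (B + int i) u)))
     - scale ((-1) ^ n) (\<Sum>i<S. scale (iterate_coeff n i)
          (res_binom c (wt_floor ?a) (B - int n - int i) (act H (int i) u)))"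
    unfolding K by (rule res_binom_Cons_split[OF cut])
  also have "\<dots> \<in> W"
  proof (rule span_diff)
    show "(\<Sum>i<S. scale (iterate_coeff n i)
          (act H (- int n - int i) (res_binom c (wt_floor c + n) (B + int i) u))) \<in> W"
      using h_leading_terms_in_W[OF IH cut n] B eps by simp
    show "scale ((-1) ^ n) (\<Sum>i<S. scale (iterate_coeff n i)
          (res_binom c (wt_floor ?a) (B - int n - int i) (act H (int i) u))) \<in> W"
    proof (intro span_scale span_sum)
      fix i
      show "res_binom c (wt_floor ?a) (B - int n - int i) (act H (int i) u) \<in> W"
      proof (rule res_binom_in_W[OF IH valid_c])
        show "\<lfloor>wt c\<rfloor> \<le> int (wt_floor ?a)" using K wt_floor_int[OF valid_c] by simp
        show "B - int n - int i + int (wt_floor ?a) \<le> \<lfloor>wt c\<rfloor> - 1 - wt_eps c"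
          using K B eps wt_floor_int[OF valid_c] by simp
      qed
    qed
  qed
  finally show "res_binom ?a (wt_floor ?a) B u \<in> W" .
qed

lemma f_leading_terms_congruence:
  assumes valid_c: "valid_word c" and IH_f0: "\<forall>x\<in>set (f0_on_word c). residues_in_W (snd x)"
    and cut: "iterate_cutoff c B u S" and n: "1 \<le> n" and B: "B \<le> -1 - eps_wt (wt c + z)"
  shows "(\<Sum>i<S. scale (iterate_coeff n i)
            (act F (- int n - int i) (res_binom c (nat \<lfloor>wt c + z\<rfloor> + n) (B + int i) u)))
         - scale ((-1) ^ n) (res_binom c (nat \<lfloor>wt c + z\<rfloor>) B (act F 0 u)) \<in> W"
proof -
  let ?K = "nat \<lfloor>wt c + z\<rfloor>"
  let ?X = "\<lambda>i. res_binom c (?K + n) (B + int i) u"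
  define Fs where "Fs = (\<Sum>(\<alpha>, w)\<leftarrow>f0_on_word c. scale \<alpha> (res_binom w ?K B u))"
  have K: "int ?K = \<lfloor>wt c + z\<rfloor>"
    using word_wt_nonneg[of z c] valid_c z_pos z_less_one by simp
  have "(\<Sum>i<S. scale ((-1) ^ i * iterate_coeff n i) (?X i)) = res_binom c ?K B u"
    by (rule res_binom_neg_binomial[OF _ n]) (use cut in \<open>simp add: iterate_cutoff_def\<close>)
  then have f0_sum: "act F 0 (\<Sum>i<S. scale ((-1) ^ i * iterate_coeff n i) (?X i))
      = res_binom c ?K B (act F 0 u) + Fs"
    unfolding Fs_def by (simp add: f0_res_binom_commute)
  have "Fs \<in> W"
    unfolding Fs_def
  proof (rule span_sum_list)
    fix x assume x: "x \<in> set (f0_on_word c)"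
    have wt_x: "wt (snd x) = wt c + z" and valid_x: "valid_word (snd x)"
      using f0_on_word_wt[OF x] f0_on_word_valid[OF x valid_c] by auto
    have "res_binom (snd x) ?K B u \<in> W"
    proof (rule res_binom_in_W[OF _ valid_x])
      show "residues_in_W (snd x)" using IH_f0 x by blast
      show "\<lfloor>wt (snd x)\<rfloor> \<le> int ?K" using wt_x K by simp
      show "B + int ?K \<le> \<lfloor>wt (snd x)\<rfloor> - 1 - wt_eps (snd x)"
        using wt_x K B unfolding wt_eps_def by simp
    qed
    then show "(case x of (\<alpha>, w) \<Rightarrow> scale \<alpha> (res_binom w ?K B u)) \<in> W"
      by (simp add: case_prod_unfold span_scale)
  qed
  then have "(\<Sum>i<S. scale (iterate_coeff n i) (act F (- int n - int i) (?X i)))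
      - scale ((-1) ^ n) (res_binom c ?K B (act F 0 u) + Fs) + scale ((-1) ^ n) Fs \<in> W"
    using f_modes_sum_congruence[of "iterate_coeff n" n ?X S] unfolding f0_sum by (intro span_add span_scale)
  then show ?thesis by (simp add: scale_right_distrib)
qed

lemma f_trailing_terms_congruence:
  assumes IH: "residues_in_W c" and valid_c: "valid_word c"
    and cut: "iterate_cutoff c B u S" and B: "B \<le> -1 - eps_wt (wt c + z)"
  shows "(\<Sum>i<S. scale (iterate_coeff n i)
            (res_binom c (nat \<lfloor>wt c + z\<rfloor> + n) (B - int n - int i) (act F (int i) u)))
         - res_binom c (nat \<lfloor>wt c + z\<rfloor>) B (act F 0 u) \<in> W"
proof (cases "S = 0")
  case True
  then have "act F (int 0) u = 0" using cut unfolding iterate_cutoff_def by blast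
  then show ?thesis by (simp add: True res_binom_def span_zero)
next
  case False
  let ?K = "nat \<lfloor>wt c + z\<rfloor>"
  let ?f = "act F 0 u"
  have K: "int ?K = \<lfloor>wt c + z\<rfloor>"
    using word_wt_nonneg[of z c] valid_c z_pos z_less_one by simp
  have K_lower: "\<lfloor>wt c\<rfloor> \<le> int ?K"
    using K z_pos by (simp add: floor_mono)
  have K_upper: "int ?K + wt_eps c \<le> \<lfloor>wt c\<rfloor> + 1"
    using K floor_plus_frac_add_eps_wt[OF z_pos z_less_one, of "wt c"] unfolding wt_eps_def by simp
  have B_nonpos: "B \<le> -1" using B eps_wt_nonneg[of "wt c + z"] by simp
  define P where "P = (\<Sum>j<n. scale (of_nat (n choose j)) (res_binom c ?K (B - int n + int j) ?f))"
  have "res_binom c (?K + n) (B - int n) ?f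
      = (\<Sum>j\<le>n. scale (of_nat (n choose j)) (res_binom c ?K (B - int n + int j) ?f))"
    by (rule res_binom_add_exponent)
  also have "\<dots> = res_binom c ?K B ?f + P"
    unfolding P_def by (simp add: lessThan_Suc_atMost[symmetric])
  finally have first_term: "res_binom c (?K + n) (B - int n) ?f = res_binom c ?K B ?f + P" .
  have "P \<in> W"
    unfolding P_def
  proof (intro span_sum span_scale)
    fix j assume "j \<in> {..<n}"
    then show "res_binom c ?K (B - int n + int j) ?f \<in> W"
      using K_lower K_upper B_nonpos by (intro res_binom_in_W[OF IH valid_c]) auto
  qed
  moreover have "(\<Sum>i\<in>{1..<S}. scale (iterate_coeff n i)
      (res_binom c (?K + n) (B - int n - int i) (act F (int i) u))) \<in> W"
  proof (intro span_sum span_scale)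
    fix i assume "i \<in> {1..<S}"
    then show "res_binom c (?K + n) (B - int n - int i) (act F (int i) u) \<in> W"
      using K_lower K_upper B_nonpos by (intro res_binom_in_W[OF IH valid_c]) auto
  qed
  moreover have "{..<S} = insert 0 {1..<S}" using False by auto
  ultimately show ?thesis by (simp add: first_term span_add)
qed

lemma residues_in_W_Cons_F:
  assumes valid: "valid_word ((F, n) # c)" and IH: "residues_in_W c"
    and IH_f0: "\<forall>x\<in>set (f0_on_word c). residues_in_W (snd x)"
  shows "residues_in_W ((F, n) # c)"
  unfolding residues_in_W_def
proof (intro allI impI)
  let ?a = "(F, n) # c"
  let ?K = "nat \<lfloor>wt c + z\<rfloor>"
  fix B u assume B: "B \<le> -1 - wt_eps ?a"
  let ?R = "res_binom c ?K B (act F 0 u)"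
  have n: "1 \<le> n" and valid_c: "valid_word c" using valid by auto
  have wa: "wt ?a = of_nat n + (wt c + z)" by simp
  have "0 \<le> \<lfloor>wt c + z\<rfloor>"
    using word_wt_nonneg[of z c] valid_c z_pos z_less_one by simp
  then have K: "wt_floor ?a = ?K + n"
    unfolding wt_floor_def wa by (simp add: nat_add_distrib)
  have eps: "wt_eps ?a = eps_wt (wt c + z)"
    unfolding wt_eps_def wa by (rule eps_wt_of_nat_add)
  obtain S where cut: "iterate_cutoff c B u S" using iterate_cutoff_exists by blast
  have "res_binom ?a (wt_floor ?a) B u
     = ((\<Sum>i<S. scale (iterate_coeff n i)
            (act F (- int n - int i) (res_binom c (?K + n) (B + int i) u)))
         - scale ((-1) ^ n) ?R)
     - scale ((-1) ^ n) ((\<Sum>i<S. scale (iterate_coeff n i)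
            (res_binom c (?K + n) (B - int n - int i) (act F (int i) u))) - ?R)"
    unfolding res_binom_Cons_split[OF cut] K by (simp add: scale_right_diff_distrib)
  also have "\<dots> \<in> W"
  proof -
    have B': "B \<le> -1 - eps_wt (wt c + z)" using B eps by simp
    show ?thesis
      by (rule span_diff[OF f_leading_terms_congruence[OF valid_c IH_f0 cut n B']
            span_scale[OF f_trailing_terms_congruence[OF IH valid_c cut B']]])
  qed
  finally show "res_binom ?a (wt_floor ?a) B u \<in> W" .
qed

lemma residues_in_W_valid_word: "valid_word w \<Longrightarrow> residues_in_W w"
proof (induction "length w" arbitrary: w rule: less_induct)
  case less
  show ?case
  proof (cases w)
    case Nil
    have "wt_eps [] = 1" "wt_floor [] = 0"
      unfolding wt_eps_def wt_floor_def eps_wt_def by simp_all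
    then show ?thesis
      using Nil by (simp add: residues_in_W_def res_binom_def span_zero)
  next
    case (Cons p c)
    obtain b n where p: "p = (b, n)" by (cases p)
    have valid_c: "valid_word c" using less.prems Cons p by simp
    have IH: "residues_in_W c" using less.hyps[of c] valid_c Cons by simp
    have IH_f0: "\<forall>x\<in>set (f0_on_word c). residues_in_W (snd x)"
      using less.hyps f0_on_word_length f0_on_word_valid[OF _ valid_c] Cons by auto
    show ?thesis
      using residues_in_W_Cons_E[OF _ IH] residues_in_W_Cons_H[OF _ IH] residues_in_W_Cons_F[OF _ IH IH_f0]
        less.prems Cons p by (cases b) simp_all
  qed
qed

lemma res_elem_eq_res_binom: "res_elem scale act z w u = res_binom w (wt_floor w) (-1 - wt_eps w) u"
  unfolding res_elem_def Let_def res_binom_def wt_floor_def wt_eps_def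
  by (simp add: algebra_simps)

lemma O_space_subset_W: "O_space scale act z \<subseteq> W"
  unfolding O_space_def
proof (rule span_minimal)
  show "{res_elem scale act z w u |w u. \<forall>p\<in>set w. 1 \<le> snd p} \<subseteq> W"
    using residues_in_W_valid_word
    by (auto simp: res_elem_eq_res_binom residues_in_W_def valid_word_def)
qed (rule subspace_span)

lemma res_binom_Nil:
  "res_binom [] G B v = (if B \<le> -1 \<and> -1 - B \<le> int G then scale (of_nat (G choose nat (-1 - B))) v else 0)"
proof (cases "B \<le> -1")
  case True
  have "res_binom [] G B v = (\<Sum>j\<le>G. if j = nat (-1 - B) then scale (of_nat (G choose j)) v else 0)"
    unfolding res_binom_def by (rule sum.cong) (use True in auto)
  then show ?thesis using True by (simp add: nat_le_iff)
next
  case False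
  then show ?thesis unfolding res_binom_def by (intro trans[OF sum.neutral]) auto
qed

lemma of_nat_plus_minus_z_notin_Ints: "of_nat n + z \<notin> \<int>" "of_nat n - z \<notin> \<int>"
proof -
  have "z \<notin> \<int>"
    using z_pos z_less_one by (auto elim: Ints_cases)
  moreover have "z = (of_nat n + z) - of_nat n" "z = of_nat n - (of_nat n - z)" by simp_all
  ultimately show "of_nat n + z \<notin> \<int>" "of_nat n - z \<notin> \<int>"
    using Ints_diff Ints_of_nat by metis+
qed

lemma res_elem_E: "1 \<le> n \<Longrightarrow> res_elem scale act z [(E, n)] u = act E (- int n) u"
proof -
  assume n: "1 \<le> n"
  have "\<lfloor>(of_nat n - z :: rat)\<rfloor> = int n - 1" using z_pos z_less_one by (simp add: floor_eq_iff)
  then have K: "wt_floor [(E, n)] = n - 1" unfolding wt_floor_def using n by simp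
  have e: "wt_eps [(E, n)] = 0"
    using of_nat_plus_minus_z_notin_Ints(2)[of n] unfolding wt_eps_def eps_wt_def by simp
  obtain S where cut: "iterate_cutoff [] (-1) u (max S 1)"
    using iterate_cutoff_exists iterate_cutoff_mono max.cobounded1 order_refl by metis
  have "res_elem scale act z [(E, n)] u = res_binom [(E, n)] (n - 1) (-1) u"
    unfolding res_elem_eq_res_binom K e by simp
  also have "\<dots> = (\<Sum>i\<in>{0}. scale (iterate_coeff n i)
     (act E (- int n - int i) (res_binom [] (n - 1) (-1 + int i) u)
      - scale ((-1) ^ n) (res_binom [] (n - 1) (-1 - int n - int i) (act E (int i) u))))"
    unfolding res_binom_Cons[OF cut]
    by (rule sum.mono_neutral_right) (auto simp: res_binom_Nil)
  also have "\<dots> = act E (- int n) u" using n by (simp add: res_binom_Nil)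
  finally show ?thesis .
qed

lemma res_elem_F:
  "1 \<le> n \<Longrightarrow> res_elem scale act z [(F, n)] u = act F (- int n) u - scale ((-1) ^ n) (act F 0 u)"
proof -
  assume n: "1 \<le> n"
  have "\<lfloor>(of_nat n + z :: rat)\<rfloor> = int n" using z_pos z_less_one by (simp add: floor_eq_iff)
  then have K: "wt_floor [(F, n)] = n" unfolding wt_floor_def by simp
  have e: "wt_eps [(F, n)] = 0"
    using of_nat_plus_minus_z_notin_Ints(1)[of n] unfolding wt_eps_def eps_wt_def by simp
  obtain S where cut: "iterate_cutoff [] (-1) u (max S 1)"
    using iterate_cutoff_exists iterate_cutoff_mono max.cobounded1 order_refl by metis
  have "res_elem scale act z [(F, n)] u = res_binom [(F, n)] n (-1) u"
    unfolding res_elem_eq_res_binom K e by simp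
  also have "\<dots> = (\<Sum>i\<in>{0}. scale (iterate_coeff n i)
     (act F (- int n - int i) (res_binom [] n (-1 + int i) u)
      - scale ((-1) ^ n) (res_binom [] n (-1 - int n - int i) (act F (int i) u))))"
    unfolding res_binom_Cons[OF cut]
    by (rule sum.mono_neutral_right) (auto simp: res_binom_Nil)
  also have "\<dots> = act F (- int n) u - scale ((-1) ^ n) (act F 0 u)" using n by (simp add: res_binom_Nil)
  finally show ?thesis .
qed

lemma res_elem_H:
  "1 \<le> n \<Longrightarrow>
    res_elem scale act z [(H, n)] u = scale (of_nat n) (act H (- int n - 1) u + act H (- int n) u)"
proof -
  assume n: "1 \<le> n"
  have K: "wt_floor [(H, n)] = n" unfolding wt_floor_def by simp
  have e: "wt_eps [(H, n)] = 1" unfolding wt_eps_def eps_wt_def by simp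
  obtain S where cut: "iterate_cutoff [] (-2) u (max S 2)"
    using iterate_cutoff_exists iterate_cutoff_mono max.cobounded1 order_refl by metis
  have "res_elem scale act z [(H, n)] u = res_binom [(H, n)] n (-2) u"
    unfolding res_elem_eq_res_binom K e by simp
  also have "\<dots> = (\<Sum>i\<in>{0, 1}. scale (iterate_coeff n i)
     (act H (- int n - int i) (res_binom [] n (-2 + int i) u)
      - scale ((-1) ^ n) (res_binom [] n (-2 - int n - int i) (act H (int i) u))))"
    unfolding res_binom_Cons[OF cut]
    by (rule sum.mono_neutral_right) (auto simp: res_binom_Nil)
  also have "\<dots> = scale (of_nat n) (act H (- int n - 1) u + act H (- int n) u)"
    using n by (simp add: res_binom_Nil act_scale algebra_simps)
  finally show ?thesis .
qed

lemma res_elem_in_O_space: "valid_word w \<Longrightarrow> res_elem scale act z w u \<in> O_space scale act z"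
  unfolding O_space_def valid_word_def by (rule span_base) blast

lemma e_mode_in_O_space: "0 < m \<Longrightarrow> act E (- m) u \<in> O_space scale act z"
  using res_elem_in_O_space[of "[(E, nat m)]" u] res_elem_E[of "nat m" u] by simp

lemma f_pair_in_O_space:
  assumes "0 < m"
  shows "act F (- m) u + act F (1 - m) u \<in> O_space scale act z"
proof (cases "m = 1")
  case True
  then show ?thesis using res_elem_in_O_space[of "[(F, 1)]" u] res_elem_F[of 1 u] by simp
next
  case False
  define k where "k = nat m"
  have k: "m = int k" "2 \<le> k" using assms False unfolding k_def by auto
  have "k = Suc (k - 1)" using k by simp
  then have "(-1 :: complex) ^ k = - ((-1) ^ (k - 1))"
    by (metis power_Suc mult_minus1)
  then have sign: "(-1 :: complex) ^ k + (-1) ^ (k - 1) = 0" by simp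
  have "res_elem scale act z [(F, k)] u + res_elem scale act z [(F, k - 1)] u
      = act F (- int k) u + act F (- int (k - 1)) u - scale ((-1) ^ k + (-1) ^ (k - 1)) (act F 0 u)"
    using res_elem_F[of k u] res_elem_F[of "k - 1" u] k by (simp add: algebra_simps)
  also have "\<dots> = act F (- m) u + act F (1 - m) u"
    unfolding sign using k by simp
  finally show ?thesis
    using span_add[of "res_elem scale act z [(F, k)] u" _ "res_elem scale act z [(F, k - 1)] u"]
      res_elem_in_O_space[of "[(F, k)]" u] res_elem_in_O_space[of "[(F, k - 1)]" u] k
    unfolding O_space_def by simp
qed

lemma h_pair_in_O_space:
  assumes "0 < m"
  shows "act H (- m - 1) u + act H (- m) u \<in> O_space scale act z"
proof -
  have "res_elem scale act z [(H, nat m)] u = scale (of_int m) (act H (- m - 1) u + act H (- m) u)"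
    using res_elem_H[of "nat m" u] assms by simp
  then have "act H (- m - 1) u + act H (- m) u
      = scale (1 / of_int m) (res_elem scale act z [(H, nat m)] u)"
    using assms by simp
  also have "\<dots> \<in> O_space scale act z"
    using res_elem_in_O_space[of "[(H, nat m)]" u] assms unfolding O_space_def
    by (intro span_scale) simp
  finally show ?thesis .
qed

lemma W_subset_O_space: "W \<subseteq> O_space scale act z"
proof (rule span_minimal)
  show "O_generators \<subseteq> O_space scale act z"
    unfolding O_generators_def using e_mode_in_O_space f_pair_in_O_space h_pair_in_O_space by blast
  show "subspace (O_space scale act z)" unfolding O_space_def by (rule subspace_span)
qed

lemma O_space_eq_W: "O_space scale act z = W"
  using O_space_subset_W W_subset_O_space by blast

end

theorem proposition4p1:
  fixes scale :: "complex \<Rightarrow> 'm::ab_group_add \<Rightarrow> 'm"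
    and act :: "sl2 \<Rightarrow> int \<Rightarrow> 'm \<Rightarrow> 'm"
    and l :: complex and z :: rat
  assumes "l \<noteq> -2"
    and "0 < z" and "z < 1"
    and "weak_affine_module scale l act"
  shows "O_space scale act z = module.span scale
     ({act F (- m) u + act F (1 - m) u | m u. m > 0}
      \<union> {act E (- m) u | m u. m > 0}
      \<union> {act H (- m - 1) u + act H (- m) u | m u. m > 0})"
proof -
  interpret sl2_affine_module_shifted scale act l z
    using weak_affine_module_imp_sl2_affine_module[OF assms(4)] assms(2,3)
    by (intro sl2_affine_module_shifted.intro sl2_affine_module_shifted_axioms.intro)
  show ?thesis
    using O_space_eq_W unfolding O_generators_def .
qed

end
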